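(* Let $G$ be a connected graph, and let $L$ be a list-assignment with $|L(u)|\ge\deg(u)+1$ for all $u\in V(G)$ and $|L(v)|\ge\deg(v)+2$ for some vertex $v$. Let $\alpha,\beta$ be two unfrozen $L$-colourings. Fix $w\in V(G)$ and let $P$ be a shortest $v,w$-path. There exists a recolouring sequence $\mathcal{S}$ from $\alpha$ to some $L$-colouring $\gamma$ such that (i) $\gamma(w)=\beta(w)$, (ii) $v$ is unfrozen under $\gamma$, (iii) every vertex recoloured during $\mathcal{S}$ belongs to $V(P)\cup(N(w)\cap\alpha^{-1}(\beta(w)))$, and (iv) $|\mathcal{S}|\le\deg(w)+2+2|V(P)|$.
   Context: An $L$-colouring is a proper colouring $\varphi$ with $\varphi(v)\in L(v)$ for all $v$. A recolouring sequence is a sequence of single-vertex recolouring steps, each changing the colour of one vertex to another colour of its list so that the colouring remains proper; $|\mathcal{S}|$ is its number of steps. A vertex $u$ is frozen under $\varphi$ if every colour of $L(u)\setminus\{\varphi(u)\}$ appears on a neighbour of $u$, and unfrozen otherwise; a colouring is unfrozen if some vertex is unfrozen under it. *)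

theory Defs
  imports Main
begin

definition graph :: "'a set \<Rightarrow> ('a \<Rightarrow> 'a \<Rightarrow> bool) \<Rightarrow> bool" where
  "graph V E \<longleftrightarrow> finite V \<and> (\<forall>x y. E x y \<longrightarrow> E y x) \<and> (\<forall>x. \<not> E x x)
     \<and> (\<forall>x y. E x y \<longrightarrow> x \<in> V \<and> y \<in> V)"

definition nbhd :: "'a set \<Rightarrow> ('a \<Rightarrow> 'a \<Rightarrow> bool) \<Rightarrow> 'a \<Rightarrow> 'a set" where
  "nbhd V E u = {x \<in> V. E u x}"

definition deg :: "'a set \<Rightarrow> ('a \<Rightarrow> 'a \<Rightarrow> bool) \<Rightarrow> 'a \<Rightarrow> nat" where
  "deg V E u = card (nbhd V E u)"

definition is_path :: "'a set \<Rightarrow> ('a \<Rightarrow> 'a \<Rightarrow> bool) \<Rightarrow> 'a list \<Rightarrow> bool" where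
  "is_path V E p \<longleftrightarrow> p \<noteq> [] \<and> set p \<subseteq> V \<and> distinct p
     \<and> (\<forall>i. Suc i < length p \<longrightarrow> E (p ! i) (p ! Suc i))"

definition connected_graph :: "'a set \<Rightarrow> ('a \<Rightarrow> 'a \<Rightarrow> bool) \<Rightarrow> bool" where
  "connected_graph V E \<longleftrightarrow> V \<noteq> {} \<and>
     (\<forall>x\<in>V. \<forall>y\<in>V. \<exists>p. is_path V E p \<and> hd p = x \<and> last p = y)"

definition shortest_path :: "'a set \<Rightarrow> ('a \<Rightarrow> 'a \<Rightarrow> bool) \<Rightarrow> 'a \<Rightarrow> 'a \<Rightarrow> 'a list \<Rightarrow> bool" where
  "shortest_path V E x y p \<longleftrightarrow> is_path V E p \<and> hd p = x \<and> last p = y \<and>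
     (\<forall>q. is_path V E q \<and> hd q = x \<and> last q = y \<longrightarrow> length p \<le> length q)"

definition L_colouring :: "'a set \<Rightarrow> ('a \<Rightarrow> 'a \<Rightarrow> bool) \<Rightarrow> ('a \<Rightarrow> 'c set) \<Rightarrow> ('a \<Rightarrow> 'c) \<Rightarrow> bool" where
  "L_colouring V E L \<phi> \<longleftrightarrow> (\<forall>u\<in>V. \<phi> u \<in> L u) \<and> (\<forall>x\<in>V. \<forall>y\<in>V. E x y \<longrightarrow> \<phi> x \<noteq> \<phi> y)"

definition frozen :: "'a set \<Rightarrow> ('a \<Rightarrow> 'a \<Rightarrow> bool) \<Rightarrow> ('a \<Rightarrow> 'c set) \<Rightarrow> ('a \<Rightarrow> 'c) \<Rightarrow> 'a \<Rightarrow> bool" where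
  "frozen V E L \<phi> u \<longleftrightarrow> (\<forall>c \<in> L u - {\<phi> u}. \<exists>x \<in> nbhd V E u. \<phi> x = c)"

definition unfrozen_colouring :: "'a set \<Rightarrow> ('a \<Rightarrow> 'a \<Rightarrow> bool) \<Rightarrow> ('a \<Rightarrow> 'c set) \<Rightarrow> ('a \<Rightarrow> 'c) \<Rightarrow> bool" where
  "unfrozen_colouring V E L \<phi> \<longleftrightarrow> (\<exists>u\<in>V. \<not> frozen V E L \<phi> u)"

fun valid_recol :: "'a set \<Rightarrow> ('a \<Rightarrow> 'a \<Rightarrow> bool) \<Rightarrow> ('a \<Rightarrow> 'c set) \<Rightarrow> ('a \<Rightarrow> 'c) \<Rightarrow> ('a \<times> 'c) list \<Rightarrow> bool" where
  "valid_recol V E L \<phi> [] = True"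
| "valid_recol V E L \<phi> ((u, c) # S) \<longleftrightarrow> u \<in> V \<and> c \<noteq> \<phi> u \<and> L_colouring V E L (\<phi>(u := c))
      \<and> valid_recol V E L (\<phi>(u := c)) S"

fun apply_recol :: "('a \<Rightarrow> 'c) \<Rightarrow> ('a \<times> 'c) list \<Rightarrow> ('a \<Rightarrow> 'c)" where
  "apply_recol \<phi> [] = \<phi>"
| "apply_recol \<phi> ((u, c) # S) = apply_recol (\<phi>(u := c)) S"

definition recol_seq :: "'a set \<Rightarrow> ('a \<Rightarrow> 'a \<Rightarrow> bool) \<Rightarrow> ('a \<Rightarrow> 'c set) \<Rightarrow> ('a \<Rightarrow> 'c) \<Rightarrow> ('a \<times> 'c) list \<Rightarrow> ('a \<Rightarrow> 'c) \<Rightarrow> bool" where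
  "recol_seq V E L \<alpha> S \<gamma> \<longleftrightarrow> L_colouring V E L \<alpha> \<and> valid_recol V E L \<alpha> S \<and> apply_recol \<alpha> S = \<gamma>"

end

theory Submission
  imports Defs
begin

(* Write c for the colour beta(w). Neighbours of w coloured c that are not frozen can be
   recoloured one after another, since they are pairwise non-adjacent. A frozen vertex whose
   list has deg + 1 colours sees every other colour of its list on exactly one neighbour, so
   recolouring any neighbour unfreezes it. Hence if w is not frozen, moving w to a free colour
   unfreezes the remaining c-neighbours, these are cleared, and w takes c.
   If w is frozen, exactly one c-neighbour x remains. The slack at v lets us pass
   unfrozenness along P, one recolouring per vertex, up to the neighbour u of w on P; on a
   shortest path no earlier vertex is adjacent to w, so the closed neighbourhood of w is not
   touched. Recolouring u either frees its old colour for w, or gives u the colour c; then w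
   takes the old colour of u, which unfreezes x, x is cleared, and the argument is repeated
   once with u in place of x. The slack at v keeps v unfrozen in every colouring. *)

lemma nbhd_finite: "graph V E \<Longrightarrow> finite (nbhd V E u)"
  unfolding graph_def nbhd_def by auto

lemma not_in_nbhd_self: "graph V E \<Longrightarrow> u \<notin> nbhd V E u"
  unfolding graph_def nbhd_def by auto

lemma nbhd_sym: "graph V E \<Longrightarrow> y \<in> nbhd V E x \<Longrightarrow> x \<in> nbhd V E y"
  unfolding graph_def nbhd_def by auto

lemma L_colouring_fun_upd:
  assumes g: "graph V E" and col: "L_colouring V E L \<phi>" and "x \<in> V" and "f \<in> L x"
    and free: "\<forall>y\<in>nbhd V E x. \<phi> y \<noteq> f"
  shows "L_colouring V E L (\<phi>(x := f))"
  unfolding L_colouring_def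
proof (intro conjI ballI impI)
  fix u assume "u \<in> V"
  then show "(\<phi>(x := f)) u \<in> L u"
    using col \<open>f \<in> L x\<close> unfolding L_colouring_def by simp
next
  fix p q assume "p \<in> V" and "q \<in> V" and "E p q"
  moreover have "E q p" and "p \<noteq> q"
    using g \<open>E p q\<close> unfolding graph_def by blast+
  ultimately show "(\<phi>(x := f)) p \<noteq> (\<phi>(x := f)) q"
    using col free unfolding L_colouring_def nbhd_def by (cases "p = x"; cases "q = x") auto
qed

section \<open>Frozen vertices\<close>

lemma frozen_cong:
  "\<forall>y\<in>insert x (nbhd V E x). \<psi> y = \<phi> y \<Longrightarrow> frozen V E L \<psi> x = frozen V E L \<phi> x"
  unfolding frozen_def by simp

lemma not_frozenI: "c \<in> L x - {\<phi> x} \<Longrightarrow> \<forall>y\<in>nbhd V E x. \<phi> y \<noteq> c \<Longrightarrow> \<not> frozen V E L \<phi> x"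
  unfolding frozen_def by blast

lemma frozen_card_le:
  assumes "graph V E" and "frozen V E L \<phi> x"
  shows "card (L x) \<le> deg V E x + 1"
proof -
  have "L x - {\<phi> x} \<subseteq> \<phi> ` nbhd V E x"
    using assms(2) unfolding frozen_def by (metis imageI subsetI)
  then have "card (L x - {\<phi> x}) \<le> card (nbhd V E x)"
    by (meson assms(1) card_image_le card_mono finite_imageI le_trans nbhd_finite)
  moreover have "card (L x) - 1 \<le> card (L x - {\<phi> x})"
    using diff_card_le_card_Diff[of "{\<phi> x}" "L x"] by simp
  ultimately show ?thesis
    unfolding deg_def by linarith
qed

lemma slack_not_frozen:
  assumes "graph V E" and "deg V E v + 2 \<le> card (L v)"
  shows "\<not> frozen V E L \<phi> v"
proof
  assume "frozen V E L \<phi> v"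
  then have "card (L v) \<le> deg V E v + 1"
    by (rule frozen_card_le[OF assms(1)])
  with assms(2) show False
    by linarith
qed

lemma frozen_bij_betw_nbhd:
  assumes g: "graph V E" and col: "L_colouring V E L \<phi>" and x: "x \<in> V"
    and dx: "deg V E x + 1 \<le> card (L x)" and fr: "frozen V E L \<phi> x"
  shows "bij_betw \<phi> (nbhd V E x) (L x - {\<phi> x})"
proof -
  let ?N = "nbhd V E x"
  have finN: "finite ?N" and fin: "finite (\<phi> ` ?N)"
    using nbhd_finite[OF g] by blast+
  have sub: "L x - {\<phi> x} \<subseteq> \<phi> ` ?N"
    using fr unfolding frozen_def by (metis imageI subsetI)
  have "card (\<phi> ` ?N) \<le> card ?N"
    using card_image_le[OF finN] .
  moreover have "card ?N \<le> card (L x - {\<phi> x})"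
    using dx col x card.infinite[of "L x"] unfolding deg_def L_colouring_def by fastforce
  moreover have "card (L x - {\<phi> x}) \<le> card (\<phi> ` ?N)"
    using card_mono[OF fin sub] .
  ultimately have "card (\<phi> ` ?N) = card ?N" and "card (L x - {\<phi> x}) = card (\<phi> ` ?N)"
    by linarith+
  then show ?thesis
    unfolding bij_betw_def using eq_card_imp_inj_on[OF finN] card_subset_eq[OF fin sub] by simp
qed

lemma frozen_recolour_nbr_frees_colour:
  assumes g: "graph V E" and col: "L_colouring V E L \<phi>" and x: "x \<in> V"
    and dx: "deg V E x + 1 \<le> card (L x)" and fr: "frozen V E L \<phi> x"
    and y: "y \<in> nbhd V E x" and d: "d \<noteq> \<phi> y"
  shows "\<phi> y \<in> L x - {(\<phi>(y := d)) x}" and "\<forall>z\<in>nbhd V E x. (\<phi>(y := d)) z \<noteq> \<phi> y"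
proof -
  have bij: "bij_betw \<phi> (nbhd V E x) (L x - {\<phi> x})"
    using frozen_bij_betw_nbhd[OF g col x dx fr] .
  have "(\<phi>(y := d)) x = \<phi> x"
    using not_in_nbhd_self[OF g] y by auto
  then show "\<phi> y \<in> L x - {(\<phi>(y := d)) x}"
    using bij_betw_apply[OF bij y] by simp
  show "\<forall>z\<in>nbhd V E x. (\<phi>(y := d)) z \<noteq> \<phi> y"
    using d y bij_betw_imp_inj_on[OF bij] by (auto dest: inj_onD)
qed

lemma not_frozen_recolour_nbr:
  assumes "graph V E" and "L_colouring V E L \<phi>" and "x \<in> V"
    and "deg V E x + 1 \<le> card (L x)" and "frozen V E L \<phi> x"
    and "y \<in> nbhd V E x" and "d \<noteq> \<phi> y"
  shows "\<not> frozen V E L (\<phi>(y := d)) x"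
  using frozen_recolour_nbr_frees_colour[OF assms] by (rule not_frozenI)

section \<open>Recolouring within a vertex set and a step budget\<close>

lemma valid_recol_append:
  "valid_recol V E L \<phi> (S @ T) \<longleftrightarrow> valid_recol V E L \<phi> S \<and> valid_recol V E L (apply_recol \<phi> S) T"
  by (induction S arbitrary: \<phi>) auto

lemma apply_recol_append: "apply_recol \<phi> (S @ T) = apply_recol (apply_recol \<phi> S) T"
  by (induction S arbitrary: \<phi>) auto

lemma L_colouring_apply_recol:
  "L_colouring V E L \<phi> \<Longrightarrow> valid_recol V E L \<phi> S \<Longrightarrow> L_colouring V E L (apply_recol \<phi> S)"
  by (induction S arbitrary: \<phi>) auto

lemma apply_recol_outside: "y \<notin> fst ` set S \<Longrightarrow> apply_recol \<phi> S y = \<phi> y"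
  by (induction S arbitrary: \<phi>) auto

definition reconf :: "'a set \<Rightarrow> ('a \<Rightarrow> 'a \<Rightarrow> bool) \<Rightarrow> ('a \<Rightarrow> 'c set) \<Rightarrow> 'a set \<Rightarrow> nat
    \<Rightarrow> ('a \<Rightarrow> 'c) \<Rightarrow> ('a \<Rightarrow> 'c) \<Rightarrow> bool" where
  "reconf V E L A k \<phi> \<psi> \<longleftrightarrow> (\<exists>S. recol_seq V E L \<phi> S \<psi> \<and> fst ` set S \<subseteq> A \<and> length S \<le> k)"

lemma reconf_refl: "L_colouring V E L \<phi> \<Longrightarrow> reconf V E L A k \<phi> \<phi>"
  unfolding reconf_def recol_seq_def by (intro exI[of _ "[]"]) simp

lemma reconf_trans:
  assumes "reconf V E L A k \<phi> \<psi>" and "reconf V E L B l \<psi> \<chi>"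
  shows "reconf V E L (A \<union> B) (k + l) \<phi> \<chi>"
proof -
  obtain S T where "recol_seq V E L \<phi> S \<psi>" "fst ` set S \<subseteq> A" "length S \<le> k"
    and "recol_seq V E L \<psi> T \<chi>" "fst ` set T \<subseteq> B" "length T \<le> l"
    using assms unfolding reconf_def by blast
  moreover from this have "recol_seq V E L \<phi> (S @ T) \<chi>"
    unfolding recol_seq_def by (simp add: valid_recol_append apply_recol_append)
  ultimately show ?thesis
    unfolding reconf_def by (intro exI[of _ "S @ T"]) auto
qed

lemma reconf_mono:
  "reconf V E L A k \<phi> \<psi> \<Longrightarrow> A \<subseteq> B \<Longrightarrow> k \<le> l \<Longrightarrow> reconf V E L B l \<phi> \<psi>"
  unfolding reconf_def by (auto intro: le_trans)

lemma reconf_L_colouring: "reconf V E L A k \<phi> \<psi> \<Longrightarrow> L_colouring V E L \<psi>"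
  unfolding reconf_def recol_seq_def by (metis L_colouring_apply_recol)

lemma reconf_outside:
  assumes "reconf V E L A k \<phi> \<psi>" and "y \<notin> A"
  shows "\<psi> y = \<phi> y"
proof -
  obtain S where "apply_recol \<phi> S = \<psi>" and "fst ` set S \<subseteq> A"
    using assms(1) unfolding reconf_def recol_seq_def by blast
  with assms(2) apply_recol_outside[of y S \<phi>] show ?thesis
    by blast
qed

lemma reconf_recolour:
  assumes "graph V E" and "L_colouring V E L \<phi>" and "x \<in> V" and "f \<in> L x - {\<phi> x}"
    and "\<forall>y\<in>nbhd V E x. \<phi> y \<noteq> f"
  shows "reconf V E L {x} 1 \<phi> (\<phi>(x := f))"
proof -
  have "L_colouring V E L (\<phi>(x := f))"
    using L_colouring_fun_upd[OF assms(1-3)] assms(4,5) by simp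
  then have "recol_seq V E L \<phi> [(x, f)] (\<phi>(x := f))"
    using assms unfolding recol_seq_def by simp
  then show ?thesis
    unfolding reconf_def by (intro exI[of _ "[(x, f)]"]) simp
qed

lemma reconf_recolour_not_frozen:
  assumes "graph V E" and "L_colouring V E L \<phi>" and "x \<in> V" and "\<not> frozen V E L \<phi> x"
  obtains f where "f \<in> L x - {\<phi> x}" and "\<forall>y\<in>nbhd V E x. \<phi> y \<noteq> f"
    and "reconf V E L {x} 1 \<phi> (\<phi>(x := f))"
proof -
  from assms(4) obtain f where "f \<in> L x - {\<phi> x}" and "\<forall>y\<in>nbhd V E x. \<phi> y \<noteq> f"
    unfolding frozen_def by blast
  then show ?thesis
    using reconf_recolour[OF assms(1-3)] that by simp
qed

section \<open>Moving the target vertex to the target colour\<close>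

definition coloured_nbrs :: "'a set \<Rightarrow> ('a \<Rightarrow> 'a \<Rightarrow> bool) \<Rightarrow> ('a \<Rightarrow> 'c) \<Rightarrow> 'a \<Rightarrow> 'c \<Rightarrow> 'a set" where
  "coloured_nbrs V E \<phi> w c = {x \<in> nbhd V E w. \<phi> x = c}"

lemma finite_coloured_nbrs: "graph V E \<Longrightarrow> finite (coloured_nbrs V E \<phi> w c)"
  unfolding coloured_nbrs_def by (simp add: nbhd_finite)

lemma card_coloured_nbrs_le: "graph V E \<Longrightarrow> card (coloured_nbrs V E \<phi> w c) \<le> deg V E w"
  unfolding coloured_nbrs_def deg_def by (rule card_mono[OF nbhd_finite]) auto

lemma coloured_nbrs_cong:
  "\<forall>y\<in>nbhd V E w. \<psi> y = \<phi> y \<Longrightarrow> coloured_nbrs V E \<psi> w c = coloured_nbrs V E \<phi> w c"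
  unfolding coloured_nbrs_def by auto

lemma frozen_coloured_nbrs_singleton:
  assumes g: "graph V E" and col: "L_colouring V E L \<phi>" and w: "w \<in> V"
    and dw: "deg V E w + 1 \<le> card (L w)" and fw: "frozen V E L \<phi> w"
    and x: "x \<in> coloured_nbrs V E \<phi> w c"
  shows "coloured_nbrs V E \<phi> w c = {x}"
proof -
  have "inj_on \<phi> (nbhd V E w)"
    using bij_betw_imp_inj_on[OF frozen_bij_betw_nbhd[OF g col w dw fw]] .
  then show ?thesis
    using x unfolding coloured_nbrs_def by (auto dest: inj_onD)
qed

lemma reconf_recolour_unfrozen_coloured_nbrs:
  assumes g: "graph V E" and col: "L_colouring V E L \<phi>"
  shows "\<exists>\<psi>. reconf V E L (coloured_nbrs V E \<phi> w c)
              (card (coloured_nbrs V E \<phi> w c) - card (coloured_nbrs V E \<psi> w c)) \<phi> \<psi>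
           \<and> coloured_nbrs V E \<psi> w c = {x \<in> coloured_nbrs V E \<phi> w c. frozen V E L \<phi> x}
           \<and> (\<forall>x\<in>coloured_nbrs V E \<psi> w c. frozen V E L \<psi> x)"
  using col
proof (induction "card (coloured_nbrs V E \<phi> w c)" arbitrary: \<phi> rule: less_induct)
  case less
  let ?C = "coloured_nbrs V E \<phi> w c"
  show ?case
  proof (cases "\<forall>x\<in>?C. frozen V E L \<phi> x")
    case True
    then show ?thesis
      using reconf_refl[OF less.prems] by (intro exI[of _ \<phi>]) auto
  next
    case False
    then obtain x where x: "x \<in> ?C" and nf: "\<not> frozen V E L \<phi> x"
      by blast
    have xV: "x \<in> V" and "\<phi> x = c"
      using x unfolding coloured_nbrs_def nbhd_def by auto
    obtain f where f: "f \<in> L x - {\<phi> x}" and step: "reconf V E L {x} 1 \<phi> (\<phi>(x := f))"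
      using reconf_recolour_not_frozen[OF g less.prems xV nf] by blast
    let ?C' = "coloured_nbrs V E (\<phi>(x := f)) w c"
    have C': "?C' = ?C - {x}"
      using f \<open>\<phi> x = c\<close> unfolding coloured_nbrs_def by auto
    have smaller: "card ?C' < card ?C"
      unfolding C' using x finite_coloured_nbrs[OF g] by (meson card_Diff1_less)
    have frozen_same: "frozen V E L (\<phi>(x := f)) z = frozen V E L \<phi> z" if z: "z \<in> ?C - {x}" for z
    proof (rule frozen_cong)
      have "z \<in> V" and "\<phi> z = c"
        using z unfolding coloured_nbrs_def nbhd_def by auto
      then have "\<not> E z x"
        using less.prems xV \<open>\<phi> x = c\<close> unfolding L_colouring_def by metis
      then show "\<forall>y\<in>insert z (nbhd V E z). (\<phi>(x := f)) y = \<phi> y"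
        using z unfolding nbhd_def by auto
    qed
    obtain \<psi> where rest: "reconf V E L ?C' (card ?C' - card (coloured_nbrs V E \<psi> w c)) (\<phi>(x := f)) \<psi>"
      and C\<psi>: "coloured_nbrs V E \<psi> w c = {z \<in> ?C'. frozen V E L (\<phi>(x := f)) z}"
      and frozen_\<psi>: "\<forall>z\<in>coloured_nbrs V E \<psi> w c. frozen V E L \<psi> z"
      using less.hyps[OF smaller reconf_L_colouring[OF step]] by blast
    have "card (coloured_nbrs V E \<psi> w c) \<le> card ?C'"
      unfolding C\<psi> using finite_coloured_nbrs[OF g] by (intro card_mono) auto
    then have "reconf V E L ?C (card ?C - card (coloured_nbrs V E \<psi> w c)) \<phi> \<psi>"
      using reconf_trans[OF step rest] smaller by (elim reconf_mono) (use C' x in auto)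
    moreover have "coloured_nbrs V E \<psi> w c = {z \<in> ?C. frozen V E L \<phi> z}"
      using C\<psi> C' frozen_same nf by auto
    ultimately show ?thesis
      using frozen_\<psi> by blast
  qed
qed

lemma reconf_recolour_free:
  assumes "graph V E" and "L_colouring V E L \<phi>" and "w \<in> V" and "c \<in> L w" and "\<phi> w \<noteq> c"
    and "coloured_nbrs V E \<phi> w c = {}"
  shows "reconf V E L {w} 1 \<phi> (\<phi>(w := c))"
  using assms reconf_recolour[OF assms(1-3)] unfolding coloured_nbrs_def by blast

lemma reconf_recolour_target:
  assumes g: "graph V E" and dc: "\<forall>u\<in>V. deg V E u + 1 \<le> card (L u)"
    and col: "L_colouring V E L \<theta>" and w: "w \<in> V" and c: "c \<in> L w" and ne: "\<theta> w \<noteq> c"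
    and frozen_nbrs: "\<forall>x\<in>coloured_nbrs V E \<theta> w c. frozen V E L \<theta> x"
    and w_free: "coloured_nbrs V E \<theta> w c = {} \<or> \<not> frozen V E L \<theta> w"
  obtains \<gamma> where "reconf V E L (insert w (coloured_nbrs V E \<theta> w c))
      (card (coloured_nbrs V E \<theta> w c) + 2) \<theta> \<gamma>" and "\<gamma> w = c"
proof -
  let ?C = "coloured_nbrs V E \<theta> w c"
  show thesis
  proof (cases "?C = {}")
    case True
    have "reconf V E L (insert w ?C) (card ?C + 2) \<theta> (\<theta>(w := c))"
      using reconf_recolour_free[OF g col w c ne True] by (rule reconf_mono) auto
    then show ?thesis
      using that by simp
  next
    case False
    then have "\<not> frozen V E L \<theta> w"
      using w_free by simp
    then obtain e where e: "e \<in> L w - {\<theta> w}" and e_free: "\<forall>y\<in>nbhd V E w. \<theta> y \<noteq> e"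
      and step: "reconf V E L {w} 1 \<theta> (\<theta>(w := e))"
      by (rule reconf_recolour_not_frozen[OF g col w])
    have "e \<noteq> c"
      using False e_free unfolding coloured_nbrs_def by blast
    have same_nbrs: "coloured_nbrs V E (\<theta>(w := e)) w c = ?C"
      using not_in_nbhd_self[OF g, of w] by (intro coloured_nbrs_cong) auto
    have unfrozen: "\<not> frozen V E L (\<theta>(w := e)) x" if "x \<in> ?C" for x
    proof -
      have xw: "x \<in> nbhd V E w"
        using that unfolding coloured_nbrs_def by simp
      then have x: "x \<in> V" and wx: "w \<in> nbhd V E x"
        using nbhd_sym[OF g xw] unfolding nbhd_def by simp_all
      have "deg V E x + 1 \<le> card (L x)" and "frozen V E L \<theta> x"
        using dc x frozen_nbrs that by blast+
      then show ?thesis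
        using not_frozen_recolour_nbr[OF g col x _ _ wx, of e] e by simp
    qed
    obtain \<psi> where clear: "reconf V E L ?C (card ?C - card (coloured_nbrs V E \<psi> w c)) (\<theta>(w := e)) \<psi>"
      and "coloured_nbrs V E \<psi> w c = {x \<in> ?C. frozen V E L (\<theta>(w := e)) x}"
      using reconf_recolour_unfrozen_coloured_nbrs[OF g reconf_L_colouring[OF step], of w c]
      unfolding same_nbrs by blast
    then have none: "coloured_nbrs V E \<psi> w c = {}"
      using unfrozen by auto
    with clear have clear: "reconf V E L ?C (card ?C) (\<theta>(w := e)) \<psi>"
      by simp
    have "\<psi> w = e"
      using reconf_outside[OF clear] not_in_nbhd_self[OF g, of w] unfolding coloured_nbrs_def by auto
    then have last: "reconf V E L {w} 1 \<psi> (\<psi>(w := c))"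
      using reconf_recolour_free[OF g reconf_L_colouring[OF clear] w c _ none] \<open>e \<noteq> c\<close> by simp
    have "reconf V E L (insert w ?C) (card ?C + 2) \<theta> (\<psi>(w := c))"
      using reconf_trans[OF reconf_trans[OF step clear] last] by (rule reconf_mono) auto
    then show ?thesis
      using that by simp
  qed
qed

lemma reconf_recolour_target_single_nbr:
  assumes g: "graph V E" and dc: "\<forall>u\<in>V. deg V E u + 1 \<le> card (L u)"
    and col: "L_colouring V E L \<theta>" and w: "w \<in> V" and c: "c \<in> L w" and ne: "\<theta> w \<noteq> c"
    and single: "coloured_nbrs V E \<theta> w c \<subseteq> {x}"
    and x_or_w: "frozen V E L \<theta> x \<longrightarrow> \<not> frozen V E L \<theta> w"
  obtains \<gamma> where "reconf V E L {x, w} 3 \<theta> \<gamma>" and "\<gamma> w = c"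
proof (cases "x \<in> coloured_nbrs V E \<theta> w c \<and> \<not> frozen V E L \<theta> x")
  case True
  then have "x \<in> V" and "\<theta> x = c" and "x \<noteq> w"
    using not_in_nbhd_self[OF g, of w] unfolding coloured_nbrs_def nbhd_def by auto
  obtain f where "f \<in> L x - {\<theta> x}" and step: "reconf V E L {x} 1 \<theta> (\<theta>(x := f))"
    using reconf_recolour_not_frozen[OF g col \<open>x \<in> V\<close>] True by blast
  then have none: "coloured_nbrs V E (\<theta>(x := f)) w c = {}"
    using single \<open>\<theta> x = c\<close> unfolding coloured_nbrs_def by auto
  obtain \<gamma> where \<gamma>: "reconf V E L (insert w (coloured_nbrs V E (\<theta>(x := f)) w c))
      (card (coloured_nbrs V E (\<theta>(x := f)) w c) + 2) (\<theta>(x := f)) \<gamma>" and "\<gamma> w = c"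
    by (rule reconf_recolour_target[OF g dc reconf_L_colouring[OF step] w c])
      (use ne \<open>x \<noteq> w\<close> none in auto)
  have "reconf V E L {x, w} 3 \<theta> \<gamma>"
    using reconf_trans[OF step \<gamma>] by (rule reconf_mono) (use none in auto)
  then show ?thesis
    using that \<open>\<gamma> w = c\<close> by simp
next
  case False
  have "card (coloured_nbrs V E \<theta> w c) \<le> 1"
    using card_mono[OF _ single] by simp
  obtain \<gamma> where \<gamma>: "reconf V E L (insert w (coloured_nbrs V E \<theta> w c))
      (card (coloured_nbrs V E \<theta> w c) + 2) \<theta> \<gamma>" and "\<gamma> w = c"
    by (rule reconf_recolour_target[OF g dc col w c ne]) (use single False x_or_w in auto)
  have "reconf V E L {x, w} 3 \<theta> \<gamma>"
    using \<gamma> by (rule reconf_mono) (use single \<open>card (coloured_nbrs V E \<theta> w c) \<le> 1\<close> in auto)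
  then show ?thesis
    using that \<open>\<gamma> w = c\<close> by simp
qed

section \<open>Passing unfrozenness along a shortest path\<close>

lemma reconf_unfreeze_along_path:
  assumes g: "graph V E" and dc: "\<forall>u\<in>V. deg V E u + 1 \<le> card (L u)"
    and col: "L_colouring V E L \<phi>" and P: "is_path V E P"
    and slack: "deg V E (hd P) + 2 \<le> card (L (hd P))"
  shows "i < length P \<Longrightarrow> \<exists>\<psi>. reconf V E L (set (take i P)) i \<phi> \<psi> \<and> \<not> frozen V E L \<psi> (P ! i)"
proof (induction i)
  case 0
  have "P ! 0 = hd P"
    using P unfolding is_path_def by (simp add: hd_conv_nth)
  then show ?case
    using reconf_refl[OF col] slack_not_frozen[of V E "hd P" L, OF g slack] by auto
next
  case (Suc i)
  obtain \<psi> where \<psi>: "reconf V E L (set (take i P)) i \<phi> \<psi>" and nf: "\<not> frozen V E L \<psi> (P ! i)"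
    using Suc.IH[OF Suc_lessD[OF Suc.prems]] by blast
  have "set P \<subseteq> V" and adj: "E (P ! i) (P ! Suc i)"
    using P Suc.prems unfolding is_path_def by blast+
  then have Pi: "P ! i \<in> V" and Pi': "P ! Suc i \<in> V"
    using Suc.prems by (meson Suc_lessD nth_mem subsetD)+
  have take: "set (take (Suc i) P) = insert (P ! i) (set (take i P))"
    using Suc.prems by (simp add: take_Suc_conv_app_nth)
  show ?case
  proof (cases "frozen V E L \<psi> (P ! Suc i)")
    case False
    have "reconf V E L (set (take (Suc i) P)) (Suc i) \<phi> \<psi>"
      using \<psi> by (rule reconf_mono) (auto simp: take)
    with False show ?thesis
      by blast
  next
    case True
    obtain f where f: "f \<in> L (P ! i) - {\<psi> (P ! i)}"
      and step: "reconf V E L {P ! i} 1 \<psi> (\<psi>(P ! i := f))"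
      by (rule reconf_recolour_not_frozen[OF g reconf_L_colouring[OF \<psi>] Pi nf])
    have "P ! i \<in> nbhd V E (P ! Suc i)"
      using nbhd_sym[OF g, of "P ! Suc i" "P ! i"] adj Pi' unfolding nbhd_def by simp
    moreover have "deg V E (P ! Suc i) + 1 \<le> card (L (P ! Suc i))"
      using dc Pi' by blast
    ultimately have "\<not> frozen V E L (\<psi>(P ! i := f)) (P ! Suc i)"
      using not_frozen_recolour_nbr[OF g reconf_L_colouring[OF \<psi>] Pi' _ True, of "P ! i" f] f by simp
    moreover have "reconf V E L (set (take (Suc i) P)) (Suc i) \<phi> (\<psi>(P ! i := f))"
      using reconf_trans[OF \<psi> step] by (rule reconf_mono) (auto simp: take)
    ultimately show ?thesis
      by blast
  qed
qed

lemma shortest_path_no_shortcut: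
  assumes sp: "shortest_path V E x y P" and j: "j + 2 < length P"
  shows "\<not> E (P ! j) y"
proof
  assume E: "E (P ! j) y"
  have P: "is_path V E P" and "hd P = x" and "last P = y"
    and shortest: "\<And>q. is_path V E q \<Longrightarrow> hd q = x \<Longrightarrow> last q = y \<Longrightarrow> length P \<le> length q"
    using sp unfolding shortest_path_def by auto
  have "distinct P" and "set P \<subseteq> V"
    using P unfolding is_path_def by simp_all
  let ?q = "take (Suc j) P @ [y]"
  have "drop (length P - 1) P \<noteq> []" and "last (drop (length P - 1) P) = y"
    using j last_drop[of "length P - 1" P] \<open>last P = y\<close> by simp_all
  then have "y \<in> set (drop (length P - 1) P)"
    by (metis last_in_set)
  moreover have "set (take (Suc j) P) \<inter> set (drop (length P - 1) P) = {}"
    using set_take_disj_set_drop_if_distinct[OF \<open>distinct P\<close>] j by simp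
  ultimately have "y \<notin> set (take (Suc j) P)"
    by blast
  moreover have "y \<in> V"
    using \<open>set P \<subseteq> V\<close> \<open>last P = y\<close> P last_in_set[of P] unfolding is_path_def by blast
  moreover have "E (?q ! i) (?q ! Suc i)" if "Suc i < length ?q" for i
  proof (cases "i < j")
    case True
    then have "E (P ! i) (P ! Suc i)"
      using P j unfolding is_path_def by simp
    with True j show ?thesis
      by (simp add: nth_append)
  next
    case False
    with that j have "i = j"
      by simp
    with E j show ?thesis
      by (simp add: nth_append)
  qed
  ultimately have "is_path V E ?q"
    using \<open>distinct P\<close> \<open>set P \<subseteq> V\<close> set_take_subset[of "Suc j" P] unfolding is_path_def by auto
  moreover have "hd ?q = x"
    using \<open>hd P = x\<close> j by (cases P) auto
  ultimately have "length P \<le> length ?q"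
    by (rule shortest) simp
  with j show False
    by simp
qed

lemma path_penultimate_nbr:
  assumes g: "graph V E" and P: "is_path V E P" and "hd P \<noteq> last P"
  shows "2 \<le> length P" and "P ! (length P - 2) \<in> nbhd V E (last P)"
proof -
  have "length P \<noteq> 1"
  proof
    assume "length P = 1"
    then have "hd P = last P"
      using P unfolding is_path_def by (simp add: hd_conv_nth last_conv_nth)
    with \<open>hd P \<noteq> last P\<close> show False
      by simp
  qed
  moreover have "length P \<noteq> 0"
    using P unfolding is_path_def by simp
  ultimately show n: "2 \<le> length P"
    by arith
  have "E (P ! (length P - 2)) (P ! Suc (length P - 2))"
    using P n unfolding is_path_def by simp
  moreover have "Suc (length P - 2) = length P - 1"
    using n by arith
  ultimately have "E (P ! (length P - 2)) (last P)"
    using P unfolding is_path_def by (simp add: last_conv_nth)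
  moreover have "last P \<in> V"
    using P unfolding is_path_def by auto
  ultimately have "last P \<in> nbhd V E (P ! (length P - 2))"
    unfolding nbhd_def by simp
  then show "P ! (length P - 2) \<in> nbhd V E (last P)"
    by (rule nbhd_sym[OF g])
qed

lemma reconf_unfreeze_before_target:
  assumes g: "graph V E" and dc: "\<forall>u\<in>V. deg V E u + 1 \<le> card (L u)"
    and col: "L_colouring V E L \<phi>" and sp: "shortest_path V E v w P"
    and slack: "deg V E v + 2 \<le> card (L v)"
  shows "\<exists>\<psi>. reconf V E L (set (take (length P - 2) P)) (length P - 2) \<phi> \<psi>
           \<and> \<not> frozen V E L \<psi> (P ! (length P - 2))
           \<and> (\<forall>y\<in>insert w (nbhd V E w). \<psi> y = \<phi> y)"
proof -
  have P: "is_path V E P" and "hd P = v" and "last P = w"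
    using sp unfolding shortest_path_def by auto
  then have "length P - 2 < length P"
    unfolding is_path_def by simp
  then obtain \<psi> where \<psi>: "reconf V E L (set (take (length P - 2) P)) (length P - 2) \<phi> \<psi>"
    and "\<not> frozen V E L \<psi> (P ! (length P - 2))"
    using reconf_unfreeze_along_path[OF g dc col P] slack \<open>hd P = v\<close> by blast
  moreover have "y \<notin> set (take (length P - 2) P)" if y: "y \<in> insert w (nbhd V E w)" for y
  proof
    assume "y \<in> set (take (length P - 2) P)"
    then obtain j where j: "j < length P - 2" and yj: "y = P ! j"
      by (auto simp: in_set_conv_nth)
    have "w = P ! (length P - 1)"
      using P \<open>last P = w\<close> unfolding is_path_def by (simp add: last_conv_nth)
    then have "y \<noteq> w"
      using P j yj unfolding is_path_def by (simp add: nth_eq_iff_index_eq)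
    moreover have "\<not> E y w"
      using shortest_path_no_shortcut[OF sp, of j] j yj by simp
    ultimately show False
      using y nbhd_sym[OF g, of y w] unfolding nbhd_def by auto
  qed
  ultimately show ?thesis
    using reconf_outside[OF \<psi>] by blast
qed

section \<open>A frozen target vertex\<close>

lemma reconf_release_frozen_coloured_nbr:
  assumes g: "graph V E" and dc: "\<forall>u\<in>V. deg V E u + 1 \<le> card (L u)"
    and col: "L_colouring V E L \<theta>" and w: "w \<in> V"
    and b: "b \<in> L w - {\<theta> w}" and b_free: "\<forall>z\<in>nbhd V E w. \<theta> z \<noteq> b" and "b \<noteq> c"
    and x_c: "x \<in> coloured_nbrs V E \<theta> w c" and fx: "frozen V E L \<theta> x"
    and nbrs: "coloured_nbrs V E \<theta> w c \<subseteq> {u, x}"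
  shows "\<exists>\<theta>'. reconf V E L {w, x} 2 \<theta> \<theta>' \<and> \<theta>' w \<noteq> c \<and> coloured_nbrs V E \<theta>' w c \<subseteq> {u}"
proof -
  have x: "x \<in> nbhd V E w" and "\<theta> x = c"
    using x_c unfolding coloured_nbrs_def by simp_all
  then have xV: "x \<in> V" and "x \<noteq> w"
    using not_in_nbhd_self[OF g, of w] unfolding nbhd_def by auto
  have step1: "reconf V E L {w} 1 \<theta> (\<theta>(w := b))"
    using reconf_recolour[OF g col w b b_free] .
  have "\<not> frozen V E L (\<theta>(w := b)) x"
    using not_frozen_recolour_nbr[OF g col xV _ fx nbhd_sym[OF g x], of b] dc xV b by simp
  then obtain h where h: "h \<in> L x - {(\<theta>(w := b)) x}"
    and step2: "reconf V E L {x} 1 (\<theta>(w := b)) (\<theta>(w := b, x := h))"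
    by (rule reconf_recolour_not_frozen[OF g reconf_L_colouring[OF step1] xV])
  have "reconf V E L {w, x} 2 \<theta> (\<theta>(w := b, x := h))"
    using reconf_trans[OF step1 step2] by (rule reconf_mono) auto
  moreover have "(\<theta>(w := b, x := h)) w \<noteq> c"
    using \<open>x \<noteq> w\<close> \<open>b \<noteq> c\<close> by simp
  moreover have "coloured_nbrs V E (\<theta>(w := b, x := h)) w c \<subseteq> {u}"
    using nbrs h \<open>x \<noteq> w\<close> \<open>\<theta> x = c\<close> not_in_nbhd_self[OF g, of w] unfolding coloured_nbrs_def by auto
  ultimately show ?thesis
    by blast
qed

lemma reconf_exchange_via_unfrozen_nbr:
  assumes g: "graph V E" and dc: "\<forall>u\<in>V. deg V E u + 1 \<le> card (L u)"
    and col: "L_colouring V E L \<chi>" and w: "w \<in> V" and c: "c \<in> L w" and ne: "\<chi> w \<noteq> c"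
    and fw: "frozen V E L \<chi> w" and single: "coloured_nbrs V E \<chi> w c = {x}"
    and fx: "frozen V E L \<chi> x" and u: "u \<in> nbhd V E w" and fu: "\<not> frozen V E L \<chi> u"
  shows "(\<exists>\<gamma>. reconf V E L {u, w, x} 4 \<chi> \<gamma> \<and> \<gamma> w = c)
       \<or> (\<exists>\<theta>. reconf V E L {u, w, x} 3 \<chi> \<theta> \<and> \<theta> w \<noteq> c \<and> coloured_nbrs V E \<theta> w c \<subseteq> {u})"
proof -
  have x: "x \<in> nbhd V E w" and "\<chi> x = c"
    using single unfolding coloured_nbrs_def by auto
  have "u \<noteq> x" and "u \<noteq> w" and uV: "u \<in> V"
    using fx fu u not_in_nbhd_self[OF g, of w] unfolding nbhd_def by auto
  obtain f where f: "f \<in> L u - {\<chi> u}" and f_free: "\<forall>y\<in>nbhd V E u. \<chi> y \<noteq> f"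
    and step: "reconf V E L {u} 1 \<chi> (\<chi>(u := f))"
    by (rule reconf_recolour_not_frozen[OF g col uV fu])
  let ?\<theta> = "\<chi>(u := f)"
  have col\<theta>: "L_colouring V E L ?\<theta>"
    using reconf_L_colouring[OF step] .
  have old: "\<chi> u \<in> L w - {?\<theta> w}" and old_free: "\<forall>z\<in>nbhd V E w. ?\<theta> z \<noteq> \<chi> u"
    using frozen_recolour_nbr_frees_colour[OF g col w _ fw u, of f] dc w f by simp_all
  have "\<chi> u \<noteq> c" and "?\<theta> w \<noteq> c"
    using old_free x \<open>\<chi> x = c\<close> \<open>u \<noteq> x\<close> \<open>u \<noteq> w\<close> ne by auto
  show ?thesis
  proof (cases "f = c")
    case False
    have "coloured_nbrs V E ?\<theta> w c \<subseteq> {x}"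
      using single False unfolding coloured_nbrs_def by auto
    moreover have "\<not> frozen V E L ?\<theta> w"
      using old old_free by (rule not_frozenI)
    ultimately obtain \<gamma> where \<gamma>: "reconf V E L {x, w} 3 ?\<theta> \<gamma>" and "\<gamma> w = c"
      using reconf_recolour_target_single_nbr[OF g dc col\<theta> w c \<open>?\<theta> w \<noteq> c\<close>] by blast
    have "reconf V E L {u, w, x} 4 \<chi> \<gamma>"
      using reconf_trans[OF step \<gamma>] by (rule reconf_mono) auto
    with \<open>\<gamma> w = c\<close> show ?thesis
      by blast
  next
    case True
    have "x \<notin> nbhd V E u"
      using f_free \<open>\<chi> x = c\<close> True by auto
    then have "u \<notin> nbhd V E x"
      using nbhd_sym[OF g] by blast
    then have "frozen V E L ?\<theta> x = frozen V E L \<chi> x"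
      using \<open>u \<noteq> x\<close> by (intro frozen_cong) auto
    then have fx\<theta>: "frozen V E L ?\<theta> x"
      using fx by simp
    have x_c: "x \<in> coloured_nbrs V E ?\<theta> w c" and nbrs: "coloured_nbrs V E ?\<theta> w c \<subseteq> {u, x}"
      using single \<open>u \<noteq> x\<close> unfolding coloured_nbrs_def by auto
    obtain \<theta>' where \<theta>': "reconf V E L {w, x} 2 ?\<theta> \<theta>'"
      and "\<theta>' w \<noteq> c" and "coloured_nbrs V E \<theta>' w c \<subseteq> {u}"
      using reconf_release_frozen_coloured_nbr[OF g dc col\<theta> w old old_free \<open>\<chi> u \<noteq> c\<close> x_c fx\<theta> nbrs]
      by blast
    have "reconf V E L {u, w, x} 3 \<chi> \<theta>'"
      using reconf_trans[OF step \<theta>'] by (rule reconf_mono) auto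
    with \<open>\<theta>' w \<noteq> c\<close> \<open>coloured_nbrs V E \<theta>' w c \<subseteq> {u}\<close> show ?thesis
      by blast
  qed
qed

lemma reconf_frozen_target_step:
  assumes g: "graph V E" and dc: "\<forall>u\<in>V. deg V E u + 1 \<le> card (L u)"
    and col: "L_colouring V E L \<chi>" and w: "w \<in> V" and c: "c \<in> L w" and ne: "\<chi> w \<noteq> c"
    and fw: "frozen V E L \<chi> w" and single: "coloured_nbrs V E \<chi> w c = {x}"
    and u: "u \<in> nbhd V E w" and fu: "\<not> frozen V E L \<chi> u"
  shows "(\<exists>\<gamma>. reconf V E L {u, w, x} 4 \<chi> \<gamma> \<and> \<gamma> w = c)
       \<or> (\<exists>\<theta>. reconf V E L {u, w, x} 3 \<chi> \<theta> \<and> \<theta> w \<noteq> c \<and> coloured_nbrs V E \<theta> w c \<subseteq> {u})"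
proof (cases "frozen V E L \<chi> x")
  case False
  obtain \<gamma> where \<gamma>: "reconf V E L {x, w} 3 \<chi> \<gamma>" and "\<gamma> w = c"
    by (rule reconf_recolour_target_single_nbr[OF g dc col w c ne]) (use single False in auto)
  have "reconf V E L {u, w, x} 4 \<chi> \<gamma>"
    using \<gamma> by (rule reconf_mono) auto
  with \<open>\<gamma> w = c\<close> show ?thesis
    by blast
next
  case True
  then show ?thesis
    by (rule reconf_exchange_via_unfrozen_nbr[OF g dc col w c ne fw single _ u fu])
qed

lemma reconf_recolour_frozen_target:
  assumes g: "graph V E" and dc: "\<forall>u\<in>V. deg V E u + 1 \<le> card (L u)"
    and col: "L_colouring V E L \<psi>" and sp: "shortest_path V E v w P"
    and slack: "deg V E v + 2 \<le> card (L v)" and c: "c \<in> L w" and ne: "\<psi> w \<noteq> c"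
    and fw: "frozen V E L \<psi> w" and single: "coloured_nbrs V E \<psi> w c = {x}"
  obtains \<gamma> where "reconf V E L (insert x (set P)) (2 * length P + 2) \<psi> \<gamma>" and "\<gamma> w = c"
proof -
  have P: "is_path V E P" and "hd P = v" and "last P = w"
    using sp unfolding shortest_path_def by auto
  then have "w \<in> set P" and w: "w \<in> V"
    unfolding is_path_def by auto
  have "v \<noteq> w"
    using fw slack_not_frozen[of V E v L, OF g slack] by auto
  define u where "u = P ! (length P - 2)"
  have n: "2 \<le> length P" and u: "u \<in> nbhd V E w"
    using path_penultimate_nbr[OF g P] \<open>v \<noteq> w\<close> \<open>hd P = v\<close> \<open>last P = w\<close> unfolding u_def by auto
  have "u \<in> set P"
    using n unfolding u_def by simp
  note on_P = set_take_subset[of "length P - 2" P] this \<open>w \<in> set P\<close>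
  obtain \<chi> where \<chi>: "reconf V E L (set (take (length P - 2) P)) (length P - 2) \<psi> \<chi>"
    and "\<not> frozen V E L \<chi> u" and agree: "\<forall>y\<in>insert w (nbhd V E w). \<chi> y = \<psi> y"
    using reconf_unfreeze_before_target[OF g dc col sp slack] unfolding u_def by blast
  have "coloured_nbrs V E \<chi> w c = {x}" and "\<chi> w \<noteq> c" and "frozen V E L \<chi> w"
    using single ne fw coloured_nbrs_cong[of V E w \<chi> \<psi> c] frozen_cong[of w V E \<chi> \<psi> L] agree
    by auto
  then consider (finished) \<gamma> where "reconf V E L {u, w, x} 4 \<chi> \<gamma>" and "\<gamma> w = c"
    | (again) \<theta> where "reconf V E L {u, w, x} 3 \<chi> \<theta>" and "\<theta> w \<noteq> c"
        and "coloured_nbrs V E \<theta> w c \<subseteq> {u}"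
    using reconf_frozen_target_step[OF g dc reconf_L_colouring[OF \<chi>] w c]
      u \<open>\<not> frozen V E L \<chi> u\<close> by blast
  then show thesis
  proof cases
    case finished
    have "reconf V E L (insert x (set P)) (2 * length P + 2) \<psi> \<gamma>"
      using reconf_trans[OF \<chi> finished(1)] by (rule reconf_mono) (use on_P n in auto)
    then show thesis
      using finished(2) by (rule that)
  next
    case again
    obtain \<theta>' where \<theta>': "reconf V E L (set (take (length P - 2) P)) (length P - 2) \<theta> \<theta>'"
      and "\<not> frozen V E L \<theta>' u" and agree': "\<forall>y\<in>insert w (nbhd V E w). \<theta>' y = \<theta> y"
      using reconf_unfreeze_before_target[OF g dc reconf_L_colouring[OF again(1)] sp slack]
      unfolding u_def by blast
    have "coloured_nbrs V E \<theta>' w c \<subseteq> {u}" and "\<theta>' w \<noteq> c"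
      using again(2,3) coloured_nbrs_cong[of V E w \<theta>' \<theta> c] agree' by auto
    then obtain \<gamma> where \<gamma>: "reconf V E L {u, w} 3 \<theta>' \<gamma>" and "\<gamma> w = c"
      using reconf_recolour_target_single_nbr[OF g dc reconf_L_colouring[OF \<theta>'] w c]
        \<open>\<not> frozen V E L \<theta>' u\<close> by blast
    have "reconf V E L (insert x (set P)) (2 * length P + 2) \<psi> \<gamma>"
      using reconf_trans[OF reconf_trans[OF reconf_trans[OF \<chi> again(1)] \<theta>'] \<gamma>]
      by (rule reconf_mono) (use on_P n in auto)
    then show thesis
      using \<open>\<gamma> w = c\<close> by (rule that)
  qed
qed

lemma reconf_recolour_target_via_path:
  assumes g: "graph V E" and dc: "\<forall>u\<in>V. deg V E u + 1 \<le> card (L u)"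
    and col: "L_colouring V E L \<alpha>" and sp: "shortest_path V E v w P"
    and slack: "deg V E v + 2 \<le> card (L v)" and c: "c \<in> L w"
  obtains \<gamma> where "reconf V E L (set P \<union> coloured_nbrs V E \<alpha> w c) (deg V E w + 2 + 2 * length P) \<alpha> \<gamma>"
    and "\<gamma> w = c"
proof (cases "\<alpha> w = c")
  case True
  then show thesis
    using that reconf_refl[OF col] by blast
next
  case False
  let ?C = "coloured_nbrs V E \<alpha> w c"
  have "is_path V E P" and "last P = w"
    using sp unfolding shortest_path_def by auto
  then have "w \<in> set P" and w: "w \<in> V"
    unfolding is_path_def by auto
  obtain \<psi> where \<psi>: "reconf V E L ?C (card ?C - card (coloured_nbrs V E \<psi> w c)) \<alpha> \<psi>"
    and C\<psi>: "coloured_nbrs V E \<psi> w c = {x \<in> ?C. frozen V E L \<alpha> x}"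
    and frozen_\<psi>: "\<forall>x\<in>coloured_nbrs V E \<psi> w c. frozen V E L \<psi> x"
    using reconf_recolour_unfrozen_coloured_nbrs[OF g col, of w c] by blast
  have col\<psi>: "L_colouring V E L \<psi>"
    using reconf_L_colouring[OF \<psi>] .
  have "\<psi> w \<noteq> c"
    using reconf_outside[OF \<psi>] not_in_nbhd_self[OF g, of w] False
    unfolding coloured_nbrs_def by auto
  have card_\<psi>: "card (coloured_nbrs V E \<psi> w c) \<le> card ?C"
    unfolding C\<psi> using finite_coloured_nbrs[OF g] by (intro card_mono) auto
  have card_C: "card ?C \<le> deg V E w"
    using card_coloured_nbrs_le[OF g] .
  show thesis
  proof (cases "coloured_nbrs V E \<psi> w c = {} \<or> \<not> frozen V E L \<psi> w")
    case True
    obtain \<gamma> where \<gamma>: "reconf V E L (insert w (coloured_nbrs V E \<psi> w c))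
        (card (coloured_nbrs V E \<psi> w c) + 2) \<psi> \<gamma>" and "\<gamma> w = c"
      by (rule reconf_recolour_target[OF g dc col\<psi> w c \<open>\<psi> w \<noteq> c\<close> frozen_\<psi> True])
    have "reconf V E L (set P \<union> ?C) (deg V E w + 2 + 2 * length P) \<alpha> \<gamma>"
      using reconf_trans[OF \<psi> \<gamma>] by (rule reconf_mono)
        (use C\<psi> \<open>w \<in> set P\<close> card_\<psi> card_C in auto)
    then show thesis
      using \<open>\<gamma> w = c\<close> by (rule that)
  next
    case False
    then have fw: "frozen V E L \<psi> w" and "coloured_nbrs V E \<psi> w c \<noteq> {}"
      by auto
    then obtain x where x: "x \<in> coloured_nbrs V E \<psi> w c"
      by blast
    have single: "coloured_nbrs V E \<psi> w c = {x}"
      using frozen_coloured_nbrs_singleton[OF g col\<psi> w _ fw x] dc w by simp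
    obtain \<gamma> where \<gamma>: "reconf V E L (insert x (set P)) (2 * length P + 2) \<psi> \<gamma>" and "\<gamma> w = c"
      by (rule reconf_recolour_frozen_target[OF g dc col\<psi> sp slack c \<open>\<psi> w \<noteq> c\<close> fw single])
    have "x \<in> ?C"
      using x C\<psi> by simp
    have "reconf V E L (set P \<union> ?C) (deg V E w + 2 + 2 * length P) \<alpha> \<gamma>"
      using reconf_trans[OF \<psi> \<gamma>] by (rule reconf_mono) (use single \<open>x \<in> ?C\<close> card_C in auto)
    then show thesis
      using \<open>\<gamma> w = c\<close> by (rule that)
  qed
qed

theorem mainTheorem7:
  fixes V :: "'a set" and E :: "'a \<Rightarrow> 'a \<Rightarrow> bool" and L :: "'a \<Rightarrow> 'c set"
    and \<alpha> \<beta> :: "'a \<Rightarrow> 'c" and v w :: 'a and P :: "'a list"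
  assumes "graph V E" and "connected_graph V E"
    and "\<forall>u\<in>V. card (L u) \<ge> deg V E u + 1"
    and "v \<in> V" and "card (L v) \<ge> deg V E v + 2"
    and "L_colouring V E L \<alpha>" and "unfrozen_colouring V E L \<alpha>"
    and "L_colouring V E L \<beta>" and "unfrozen_colouring V E L \<beta>"
    and "w \<in> V"
    and "shortest_path V E v w P"
  shows "\<exists>S \<gamma>. recol_seq V E L \<alpha> S \<gamma> \<and> \<gamma> w = \<beta> w \<and> \<not> frozen V E L \<gamma> v
           \<and> fst ` set S \<subseteq> set P \<union> (nbhd V E w \<inter> {x. \<alpha> x = \<beta> w})
           \<and> length S \<le> deg V E w + 2 + 2 * length P"
proof -
  have "\<beta> w \<in> L w"
    using assms(8,10) unfolding L_colouring_def by blast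
  then obtain \<gamma> where
    \<gamma>: "reconf V E L (set P \<union> coloured_nbrs V E \<alpha> w (\<beta> w)) (deg V E w + 2 + 2 * length P) \<alpha> \<gamma>"
    and "\<gamma> w = \<beta> w"
    using reconf_recolour_target_via_path[OF assms(1,3,6,11,5)] by blast
  moreover have "\<not> frozen V E L \<gamma> v"
    using slack_not_frozen[of V E v L, OF assms(1,5)] .
  moreover have "coloured_nbrs V E \<alpha> w (\<beta> w) = nbhd V E w \<inter> {x. \<alpha> x = \<beta> w}"
    unfolding coloured_nbrs_def by auto
  ultimately show ?thesis
    unfolding reconf_def by auto
qed

end
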